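(* Let $G$ be a graph and $\ell=\mathrm{OPT}(G)-\mathrm{LP}(G)$. There exists a set $X\subseteq V(G)$ with $|X|\le 2\ell$ such that $\mathrm{OPT}(G-X)=\mathrm{LP}(G-X)$.
   Context: $\mathrm{OPT}(G)$ is the minimum size of a vertex cover of $G$; $\mathrm{LP}(G)=\min\{\sum_{v\in V(G)}x_v : x_u+x_v\ge1\text{ for all }\{u,v\}\in E(G),\ 0\le x_v\le1\}$. *)

theory Defs
  imports Main "HOL.Real"
begin

definition graph :: "'a set \<Rightarrow> 'a set set \<Rightarrow> bool" where
  "graph V E \<longleftrightarrow> finite V \<and> (\<forall>e\<in>E. e \<subseteq> V \<and> card e = 2)"

definition vertex_cover :: "'a set \<Rightarrow> 'a set set \<Rightarrow> 'a set \<Rightarrow> bool" where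
  "vertex_cover V E C \<longleftrightarrow> C \<subseteq> V \<and> (\<forall>e\<in>E. e \<inter> C \<noteq> {})"

definition OPT :: "'a set \<Rightarrow> 'a set set \<Rightarrow> nat" where
  "OPT V E = (LEAST k. \<exists>C. vertex_cover V E C \<and> card C = k)"

definition LP_feasible :: "'a set \<Rightarrow> 'a set set \<Rightarrow> ('a \<Rightarrow> real) \<Rightarrow> bool" where
  "LP_feasible V E x \<longleftrightarrow>
     (\<forall>u v. {u, v} \<in> E \<longrightarrow> x u + x v \<ge> 1) \<and> (\<forall>v\<in>V. 0 \<le> x v \<and> x v \<le> 1)"

definition LP :: "'a set \<Rightarrow> 'a set set \<Rightarrow> real" where
  "LP V E = Inf {(\<Sum>v\<in>V. x v) | x. LP_feasible V E x}"

definition del_vertices_V :: "'a set \<Rightarrow> 'a set \<Rightarrow> 'a set" where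
  "del_vertices_V V X = V - X"

definition del_vertices_E :: "'a set set \<Rightarrow> 'a set \<Rightarrow> 'a set set" where
  "del_vertices_E E X = {e\<in>E. e \<inter> X = {}}"

end

theory Submission
  imports Defs
begin

text \<open>Fix a minimum vertex cover \<open>C\<close>. Its complement is independent, so the edges
  between \<open>C\<close> and \<open>V - C\<close> form a bipartite graph; let its deficiency \<open>d\<close> be the
  largest value of \<open>|A| - |N(A)|\<close> over \<open>A \<subseteq> C\<close>. For a maximising \<open>A\<close>, the fractional
  cover that is \<open>1\<close> on \<open>C - A\<close> and \<open>1/2\<close> on \<open>A \<union> N(A)\<close> has weight \<open>|C| - d/2\<close>, so
  \<open>d \<le> 2(OPT - LP)\<close>. By the deficiency version of Hall's theorem, all of \<open>C\<close> but a set
  \<open>X\<close> of at most \<open>d\<close> vertices can be matched into \<open>V - C\<close>. In \<open>G - X\<close> the cover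
  \<open>C - X\<close> is then matched, and a matching is a lower bound for the LP, so
  \<open>OPT(G - X) = LP(G - X)\<close>.\<close>

lemma Hall_condition_delete_target:
  assumes Hall_strict: "\<forall>A\<subseteq>C. A \<noteq> {} \<and> A \<noteq> C \<longrightarrow> card A < card (R `` A)"
    and "c \<in> C" and "finite (R `` C)"
  shows "\<forall>A\<subseteq>C - {c}. card A \<le> card ((R \<inter> UNIV \<times> - {i}) `` A)"
proof (intro allI impI)
  fix A assume A: "A \<subseteq> C - {c}"
  show "card A \<le> card ((R \<inter> UNIV \<times> - {i}) `` A)"
  proof (cases "A = {}")
    case False
    with A \<open>c \<in> C\<close> have "card A < card (R `` A)" using Hall_strict by blast
    moreover have "(R \<inter> UNIV \<times> - {i}) `` A = R `` A - {i}" by auto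
    moreover have "finite (R `` A)"
      using A \<open>finite (R `` C)\<close> by (meson Diff_subset Image_mono finite_subset order_refl order_trans)
    ultimately show ?thesis by (auto simp: card_Diff_singleton_if)
  qed simp
qed

lemma Hall_condition_delete_critical:
  assumes Hall: "\<forall>A\<subseteq>C. card A \<le> card (R `` A)"
    and critical: "A \<subseteq> C" "card (R `` A) = card A"
    and "finite C" "finite (R `` C)"
  shows "\<forall>B\<subseteq>C - A. card B \<le> card ((R \<inter> UNIV \<times> - (R `` A)) `` B)"
proof (intro allI impI)
  fix B assume B: "B \<subseteq> C - A"
  have "finite A" "finite B"
    using B critical(1) \<open>finite C\<close> by (auto intro: finite_subset[of _ C])
  then have "card A + card B = card (A \<union> B)" using B by (subst card_Un_disjoint) auto
  also have "\<dots> \<le> card (R `` (A \<union> B))" using B critical(1) by (intro Hall[rule_format]) auto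
  also have "\<dots> = card (R `` A) + card ((R \<inter> UNIV \<times> - (R `` A)) `` B)"
  proof -
    have split: "R `` (A \<union> B) = R `` A \<union> (R \<inter> UNIV \<times> - (R `` A)) `` B" by auto
    have "R `` (A \<union> B) \<subseteq> R `` C" using B critical(1) by auto
    then have "finite (R `` (A \<union> B))" using \<open>finite (R `` C)\<close> by (rule finite_subset)
    then show ?thesis unfolding split by (subst card_Un_disjoint) auto
  qed
  finally show "card B \<le> card ((R \<inter> UNIV \<times> - (R `` A)) `` B)" using critical(2) by simp
qed

text \<open>Halmos--Vaughan: if every nonempty proper subset has surplus, any edge at any \<open>c\<close> can be
  used; otherwise a critical subset \<open>A\<close> and \<open>C - A\<close> (avoiding \<open>N(A)\<close>) are matched separately.\<close>

theorem Hall_marriage: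
  assumes "finite C" "finite (R `` C)" "\<forall>A\<subseteq>C. card A \<le> card (R `` A)"
  shows "\<exists>f. inj_on f C \<and> (\<forall>c\<in>C. (c, f c) \<in> R)"
  using assms
proof (induction "card C" arbitrary: C R rule: less_induct)
  case less
  note fin = less.prems(1,2) and Hall = less.prems(3)
  have fin_sub: "finite ((R \<inter> S) `` B)" if "B \<subseteq> C" for S B
  proof -
    have "(R \<inter> S) `` B \<subseteq> R `` C" using that by auto
    then show ?thesis using fin(2) by (rule finite_subset)
  qed
  consider (empty) "C = {}"
    | (strict) "C \<noteq> {}" "\<forall>A\<subseteq>C. A \<noteq> {} \<and> A \<noteq> C \<longrightarrow> card A < card (R `` A)"
    | (critical) A where "A \<subseteq> C" "A \<noteq> {}" "A \<noteq> C" "card (R `` A) = card A"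
    using Hall by (meson antisym not_less)
  then show ?case
  proof cases
    case empty
    then show ?thesis by simp
  next
    case strict
    then obtain c where c: "c \<in> C" by blast
    with Hall have "card {c} \<le> card (R `` {c})" by blast
    then have "R `` {c} \<noteq> {}" by auto
    then obtain i where ci: "(c, i) \<in> R" by blast
    have "\<exists>g. inj_on g (C - {c}) \<and> (\<forall>x\<in>C - {c}. (x, g x) \<in> R \<inter> UNIV \<times> - {i})"
    proof (rule less.hyps)
      show "card (C - {c}) < card C" using fin(1) c by (rule card_Diff1_less)
      show "finite ((R \<inter> UNIV \<times> - {i}) `` (C - {c}))" using fin_sub by blast
      show "\<forall>A\<subseteq>C - {c}. card A \<le> card ((R \<inter> UNIV \<times> - {i}) `` A)"
        using strict(2) c fin(2) by (rule Hall_condition_delete_target)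
    qed (use fin in simp)
    then obtain g where g: "inj_on g (C - {c})" "\<forall>x\<in>C - {c}. (x, g x) \<in> R \<and> g x \<noteq> i"
      by blast
    have "inj_on (g(c := i)) (C - {c}) = inj_on g (C - {c})" by (rule inj_on_cong) simp
    with g(1) have "inj_on (g(c := i)) (C - {c})" by simp
    moreover have "i \<notin> (g(c := i)) ` (C - {c})" using g(2) by auto
    ultimately have "inj_on (g(c := i)) (insert c (C - {c}))"
      by (metis inj_on_insert fun_upd_same Diff_idemp)
    moreover have "insert c (C - {c}) = C" using c by blast
    moreover have "\<forall>x\<in>C. (x, (g(c := i)) x) \<in> R" using g ci by simp
    ultimately show ?thesis by metis
  next
    case critical
    have "\<exists>g. inj_on g A \<and> (\<forall>x\<in>A. (x, g x) \<in> R)"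
    proof (rule less.hyps)
      show "card A < card C" using critical(1,3) fin(1) by (intro psubset_card_mono) auto
      show "finite A" using critical(1) fin(1) by (rule finite_subset)
      show "finite (R `` A)" using critical(1) fin(2) by (meson Image_mono finite_subset order_refl)
      show "\<forall>B\<subseteq>A. card B \<le> card (R `` B)" using Hall critical(1) by blast
    qed
    then obtain g where g: "inj_on g A" "\<forall>x\<in>A. (x, g x) \<in> R" by blast
    have "\<exists>h. inj_on h (C - A) \<and> (\<forall>x\<in>C - A. (x, h x) \<in> R \<inter> UNIV \<times> - (R `` A))"
    proof (rule less.hyps)
      show "card (C - A) < card C" using critical(1,2) fin(1) by (intro psubset_card_mono) auto
      show "finite ((R \<inter> UNIV \<times> - (R `` A)) `` (C - A))" using fin_sub by blast
      show "\<forall>B\<subseteq>C - A. card B \<le> card ((R \<inter> UNIV \<times> - (R `` A)) `` B)"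
        using Hall critical(1,4) fin by (rule Hall_condition_delete_critical)
    qed (use fin in simp)
    then obtain h where h: "inj_on h (C - A)" "\<forall>x\<in>C - A. (x, h x) \<in> R \<and> h x \<notin> R `` A"
      by blast
    define f where "f x = (if x \<in> A then g x else h x)" for x
    have "inj_on f A = inj_on g A" "inj_on f (C - A) = inj_on h (C - A)"
      by (rule inj_on_cong, simp add: f_def)+
    with g(1) h(1) have "inj_on f A" "inj_on f (C - A)" by simp_all
    moreover have "f ` A \<subseteq> R `` A" "f ` (C - A) \<inter> R `` A = {}" using g(2) h(2) by (auto simp: f_def)
    ultimately have "inj_on f (A \<union> (C - A))" unfolding inj_on_Un by blast
    moreover have "A \<union> (C - A) = C" using critical(1) by blast
    moreover have "\<forall>x\<in>C. (x, f x) \<in> R" using g(2) h(2) by (simp add: f_def)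
    ultimately show ?thesis by metis
  qed
qed

text \<open>Add \<open>d\<close> dummy targets related to every element of \<open>C\<close>; the elements that a
  Hall matching sends to dummies form \<open>X\<close>.\<close>

theorem Hall_deficiency:
  fixes R :: "('a \<times> 'b) set" and d :: nat
  assumes "finite C" "finite (R `` C)" "\<forall>A\<subseteq>C. card A \<le> card (R `` A) + d"
  shows "\<exists>X f. X \<subseteq> C \<and> card X \<le> d \<and> inj_on f (C - X) \<and> (\<forall>c\<in>C - X. (c, f c) \<in> R)"
proof -
  define R' :: "('a \<times> ('b + nat)) set"
    where "R' = {(c, Inl i) | c i. (c, i) \<in> R} \<union> C \<times> Inr ` {..<d}"
  have image_R': "R' `` A = Inl ` (R `` A) \<union> Inr ` {..<d}" if "A \<subseteq> C" "A \<noteq> {}" for A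
    using that unfolding R'_def by auto
  have "\<exists>g. inj_on g C \<and> (\<forall>c\<in>C. (c, g c) \<in> R')"
  proof (rule Hall_marriage)
    show "finite C" by fact
    show "finite (R' `` C)"
      using assms(2) by (cases "C = {}") (simp_all add: image_R')
    show "\<forall>A\<subseteq>C. card A \<le> card (R' `` A)"
    proof (intro allI impI)
      fix A assume A: "A \<subseteq> C"
      show "card A \<le> card (R' `` A)"
      proof (cases "A = {}")
        case False
        have "finite (R `` A)" using A assms(2) by (meson Image_mono finite_subset order_refl)
        then have "card (R' `` A)
            = card (Inl ` (R `` A) :: ('b + nat) set) + card (Inr ` {..<d} :: ('b + nat) set)"
          unfolding image_R'[OF A False] by (intro card_Un_disjoint) auto
        also have "\<dots> = card (R `` A) + d" by (simp add: card_image)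
        finally show ?thesis using assms(3) A by simp
      qed simp
    qed
  qed
  then obtain g where g: "inj_on g C" "\<forall>c\<in>C. (c, g c) \<in> R'" by blast
  define X where "X = {c\<in>C. \<not> isl (g c)}"
  define f where "f c = projl (g c)" for c
  have "g c \<in> Inr ` {..<d}" if "c \<in> X" for c
    using g(2) that unfolding X_def R'_def by auto
  then have "card (g ` X) \<le> card (Inr ` {..<d} :: ('b + nat) set)"
    by (intro card_mono) auto
  moreover have "inj_on g X" using g(1) by (rule inj_on_subset) (simp add: X_def)
  ultimately have "card X \<le> d" by (simp add: card_image)
  moreover have g_Inl: "g c = Inl (f c)" if "c \<in> C - X" for c
    using that by (simp add: X_def f_def)
  have "inj_on f (C - X)"
  proof (rule inj_onI)
    fix x y assume "x \<in> C - X" "y \<in> C - X" "f x = f y"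
    then have "g x = g y" by (simp add: g_Inl)
    with g(1) \<open>x \<in> C - X\<close> \<open>y \<in> C - X\<close> show "x = y" by (auto dest: inj_onD)
  qed
  moreover have "(c, f c) \<in> R" if "c \<in> C - X" for c
    using g(2) that g_Inl[OF that] unfolding R'_def by force
  moreover have "X \<subseteq> C" by (simp add: X_def)
  ultimately show ?thesis by blast
qed

lemma vertex_cover_vertices:
  assumes "graph V E"
  shows "vertex_cover V E V"
proof -
  have "e \<noteq> {}" "e \<subseteq> V" if "e \<in> E" for e
    using assms that by (auto simp: graph_def)
  then show ?thesis by (auto simp: vertex_cover_def)
qed

lemma obtain_minimum_vertex_cover:
  assumes "graph V E"
  obtains C where "vertex_cover V E C" "card C = OPT V E"
proof -
  have "\<exists>k C. vertex_cover V E C \<and> card C = k"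
    using vertex_cover_vertices[OF assms] by blast
  then have "\<exists>C. vertex_cover V E C \<and> card C = OPT V E"
    unfolding OPT_def by (rule LeastI_ex)
  then show ?thesis using that by blast
qed

lemma OPT_le_card_vertex_cover: "vertex_cover V E C \<Longrightarrow> OPT V E \<le> card C"
  unfolding OPT_def by (rule Least_le) blast

lemma LP_le_sum_feasible:
  assumes "LP_feasible V E x"
  shows "LP V E \<le> (\<Sum>v\<in>V. x v)"
  unfolding LP_def
proof (rule cInf_lower)
  show "(\<Sum>v\<in>V. x v) \<in> {\<Sum>v\<in>V. x v |x. LP_feasible V E x}" using assms by blast
  show "bdd_below {\<Sum>v\<in>V. x v |x. LP_feasible V E x}"
    by (rule bdd_belowI[of _ 0]) (auto simp: LP_feasible_def intro: sum_nonneg)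
qed

lemma LP_greatest:
  assumes "\<And>x. LP_feasible V E x \<Longrightarrow> b \<le> (\<Sum>v\<in>V. x v)"
  shows "b \<le> LP V E"
proof -
  have "LP_feasible V E (\<lambda>_. 1)" by (simp add: LP_feasible_def)
  then show ?thesis unfolding LP_def by (intro cInf_greatest) (use assms in auto)
qed

lemma LP_le_card_vertex_cover:
  assumes "finite V" "vertex_cover V E C"
  shows "LP V E \<le> real (card C)"
proof -
  have "LP_feasible V E (\<lambda>v. of_bool (v \<in> C))"
    using assms(2) by (fastforce simp: LP_feasible_def vertex_cover_def)
  then have "LP V E \<le> (\<Sum>v\<in>V. of_bool (v \<in> C))" by (rule LP_le_sum_feasible)
  also have "\<dots> = real (card C)"
    using assms by (simp add: sum_of_bool_eq vertex_cover_def Int_absorb1)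
  finally show ?thesis .
qed

lemma LP_le_OPT:
  assumes "graph V E"
  shows "LP V E \<le> real (OPT V E)"
proof -
  obtain C where "vertex_cover V E C" "card C = OPT V E"
    using assms by (rule obtain_minimum_vertex_cover)
  with assms show ?thesis by (metis LP_le_card_vertex_cover graph_def)
qed

lemma card_le_LP_if_matching:
  assumes "finite V" "M \<subseteq> V" "inj_on f M" "f ` M \<subseteq> V - M" "\<forall>c\<in>M. {c, f c} \<in> E"
  shows "real (card M) \<le> LP V E"
proof (rule LP_greatest)
  fix x assume x: "LP_feasible V E x"
  have "real (card M) = (\<Sum>c\<in>M. 1)" by simp
  also have "\<dots> \<le> (\<Sum>c\<in>M. x c + x (f c))"
    using x assms(5) by (intro sum_mono) (simp add: LP_feasible_def)
  also have "\<dots> = (\<Sum>v\<in>M. x v) + (\<Sum>v\<in>f ` M. x v)"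
    using assms(3) by (simp add: sum.distrib sum.reindex)
  also have "\<dots> = (\<Sum>v\<in>M \<union> f ` M. x v)"
    using assms(1,2,4) by (intro sum.union_disjoint[symmetric]) (auto intro: finite_subset[of _ V])
  also have "\<dots> \<le> (\<Sum>v\<in>V. x v)"
    using assms x by (intro sum_mono2) (auto simp: LP_feasible_def)
  finally show "real (card M) \<le> (\<Sum>v\<in>V. x v)" .
qed

lemma OPT_eq_LP_if_cover_matched:
  assumes "graph V E" "vertex_cover V E C"
    and "inj_on f C" "f ` C \<subseteq> V - C" "\<forall>c\<in>C. {c, f c} \<in> E"
  shows "real (OPT V E) = LP V E"
proof -
  have "real (card C) \<le> LP V E"
    using assms by (intro card_le_LP_if_matching) (auto simp: graph_def vertex_cover_def)
  moreover have "OPT V E \<le> card C" using assms(2) by (rule OPT_le_card_vertex_cover)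
  ultimately show ?thesis using LP_le_OPT[OF assms(1)] by linarith
qed

definition cut_rel :: "'a set \<Rightarrow> 'a set set \<Rightarrow> 'a set \<Rightarrow> ('a \<times> 'a) set" where
  "cut_rel V E C = {(c, v). c \<in> C \<and> v \<in> V - C \<and> {c, v} \<in> E}"

lemma LP_le_half_integral:
  assumes "graph V E" "vertex_cover V E C" "A \<subseteq> C"
  shows "LP V E \<le> real (card C) - (real (card A) - real (card (cut_rel V E C `` A))) / 2"
proof -
  define N where "N = cut_rel V E C `` A"
  have C: "C \<subseteq> V" "\<And>e. e \<in> E \<Longrightarrow> e \<inter> C \<noteq> {}" using assms(2) by (auto simp: vertex_cover_def)
  have N: "N \<subseteq> V - C" by (auto simp: N_def cut_rel_def)
  have finite: "finite V" "finite A" "finite C"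
    using assms C(1) by (auto simp: graph_def intro: finite_subset)
  define x :: "'a \<Rightarrow> real" where
    "x v = of_bool (v \<in> C - A) + of_bool (v \<in> A) / 2 + of_bool (v \<in> N) / 2" for v
  have feasible: "LP_feasible V E x"
    unfolding LP_feasible_def
  proof (intro conjI allI impI ballI)
    fix u v assume uv: "{u, v} \<in> E"
    then have "u \<in> V" "v \<in> V" using assms(1) by (auto simp: graph_def)
    moreover have "u \<in> C \<or> v \<in> C" using C(2)[OF uv] by blast
    moreover have "{v, u} \<in> E" using uv by (simp add: insert_commute)
    ultimately have "u \<in> C - A \<or> v \<in> C - A \<or> u \<in> A \<and> v \<in> A \<or> u \<in> A \<and> v \<in> N \<or> v \<in> A \<and> u \<in> N"
      using uv by (auto simp: N_def cut_rel_def)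
    then show "1 \<le> x u + x v" using N by (auto simp: x_def)
  next
    fix v assume "v \<in> V"
    show "0 \<le> x v" "x v \<le> 1" using N assms(3) by (auto simp: x_def)
  qed
  have count: "(\<Sum>v\<in>V. of_bool (v \<in> S)) = real (card S)" if "S \<subseteq> V" for S
    using finite(1) that by (simp add: sum_of_bool_eq Int_absorb1)
  have "C - A \<subseteq> V" "A \<subseteq> V" "N \<subseteq> V" using C(1) assms(3) N by auto
  note counts = this[THEN count]
  from feasible have "LP V E \<le> (\<Sum>v\<in>V. x v)" by (rule LP_le_sum_feasible)
  also have "\<dots> = real (card (C - A)) + real (card A) / 2 + real (card N) / 2"
    using counts by (simp add: x_def sum.distrib flip: sum_divide_distrib)
  also have "real (card (C - A)) = real (card C) - real (card A)"
    using finite assms(3) by (simp add: card_Diff_subset card_mono of_nat_diff)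
  finally show ?thesis by (simp add: N_def field_simps)
qed

text \<open>Truncated subtraction is harmless here: \<open>A = {}\<close> already contributes \<open>0\<close>.\<close>

definition deficiency :: "'a set \<Rightarrow> ('a \<times> 'b) set \<Rightarrow> nat" where
  "deficiency C R = Max ((\<lambda>A. card A - card (R `` A)) ` Pow C)"

lemma card_le_card_Image_plus_deficiency:
  assumes "finite C" "A \<subseteq> C"
  shows "card A \<le> card (R `` A) + deficiency C R"
proof -
  have "card A - card (R `` A) \<le> deficiency C R"
    unfolding deficiency_def using assms by (intro Max_ge) auto
  then show ?thesis by linarith
qed

lemma deficiency_attained:
  assumes "finite C"
  obtains A where "A \<subseteq> C" "deficiency C R = card A - card (R `` A)"
proof -
  have "deficiency C R \<in> (\<lambda>A. card A - card (R `` A)) ` Pow C"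
    unfolding deficiency_def using assms by (intro Max_in) auto
  then show ?thesis using that by blast
qed

lemma deficiency_le_twice_gap:
  assumes "graph V E" "vertex_cover V E C"
  shows "real (deficiency C (cut_rel V E C)) \<le> 2 * (real (card C) - LP V E)"
proof -
  have "finite C" using assms by (auto simp: graph_def vertex_cover_def intro: finite_subset)
  then obtain A where A: "A \<subseteq> C" "deficiency C (cut_rel V E C) = card A - card (cut_rel V E C `` A)"
    by (rule deficiency_attained)
  show ?thesis
  proof (cases "deficiency C (cut_rel V E C) = 0")
    case True
    then show ?thesis using LP_le_card_vertex_cover assms by (fastforce simp: graph_def)
  next
    case False
    then have "real (deficiency C (cut_rel V E C)) = real (card A) - real (card (cut_rel V E C `` A))"
      using A(2) by (simp add: of_nat_diff)
    then show ?thesis using LP_le_half_integral[OF assms A(1)] by (simp add: field_simps)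
  qed
qed

lemma graph_del_vertices:
  "graph V E \<Longrightarrow> graph (del_vertices_V V X) (del_vertices_E E X)"
  by (auto simp: graph_def del_vertices_V_def del_vertices_E_def)

lemma vertex_cover_del_vertices:
  "vertex_cover V E C \<Longrightarrow> vertex_cover (del_vertices_V V X) (del_vertices_E E X) (C - X)"
  by (auto simp: vertex_cover_def del_vertices_V_def del_vertices_E_def)

theorem mainTheorem10:
  fixes V :: "'a set" and E :: "'a set set"
  assumes "graph V E"
  shows "\<exists>X. X \<subseteq> V \<and> real (card X) \<le> 2 * (real (OPT V E) - LP V E) \<and>
             real (OPT (del_vertices_V V X) (del_vertices_E E X))
               = LP (del_vertices_V V X) (del_vertices_E E X)"
proof -
  obtain C where C: "vertex_cover V E C" "card C = OPT V E"
    using assms by (rule obtain_minimum_vertex_cover)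
  define R where "R = cut_rel V E C"
  have "finite V" "C \<subseteq> V" using assms C(1) by (auto simp: graph_def vertex_cover_def)
  then have "finite C" "finite (R `` C)"
    by (auto simp: R_def cut_rel_def intro: finite_subset)
  then obtain X f where X: "X \<subseteq> C" "card X \<le> deficiency C R"
    and f: "inj_on f (C - X)" "\<forall>c\<in>C - X. (c, f c) \<in> R"
    using Hall_deficiency card_le_card_Image_plus_deficiency by metis
  have "real (card X) \<le> 2 * (real (OPT V E) - LP V E)"
    using X(2) deficiency_le_twice_gap[OF assms C(1)] C(2) by (simp add: R_def)
  moreover have "real (OPT (del_vertices_V V X) (del_vertices_E E X))
      = LP (del_vertices_V V X) (del_vertices_E E X)"
  proof (rule OPT_eq_LP_if_cover_matched)
    show "graph (del_vertices_V V X) (del_vertices_E E X)" using assms by (rule graph_del_vertices)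
    show "vertex_cover (del_vertices_V V X) (del_vertices_E E X) (C - X)"
      using C(1) by (rule vertex_cover_del_vertices)
    show "f ` (C - X) \<subseteq> del_vertices_V V X - (C - X)"
      "\<forall>c\<in>C - X. {c, f c} \<in> del_vertices_E E X"
      using f(2) X(1) by (auto simp: R_def cut_rel_def del_vertices_V_def del_vertices_E_def)
  qed (rule f(1))
  ultimately show ?thesis using X(1) \<open>C \<subseteq> V\<close> by blast
qed

end
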